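(* If $(G,\phi,\tau)$ is an optimal solution to the problem (RE) of maximizing $\phi_t+\phi_d(1-G(\tau))$ over all $(G,\phi,\tau)$ with $G$ a distribution on $[\underline{\theta},\overline{\theta}]$, $\phi=(\phi_t,\phi_d)\in\mathbb{R}^2$, $\tau\in\mathbb{R}$, subject to (w-P), (w-HE) and $E_G[s]=\mu$, then $G(s)=G(\mu+\phi_d)$ for all $s\in[\mu+\phi_d,\overline{\theta})$.
   Context: $F$ is a distribution with lowest and highest support points $0\le\underline{\theta}<\overline{\theta}<\infty$ and mean $\mu$. For a CDF $G$ on $[\underline{\theta},\overline{\theta}]$ and fees $(\phi_t,\phi_d)$: (w-P) means $\phi_t\le\int_{\mu+\phi_d}^{\overline{\theta}}[s-(\mu+\phi_d)]dG(s)$; (w-HE) for a threshold $\tau$ means $\tau-\phi_d=E_G[s\mid s\le\tau]$ and $\tau'-\phi_d\ge E_G[s\mid s\le\tau']$ for all $\tau'>\tau$. *)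

theory Defs
  imports "HOL-Probability.Probability"
begin

definition dist_on :: "real measure \<Rightarrow> real \<Rightarrow> real \<Rightarrow> bool" where
  "dist_on G lo hi \<longleftrightarrow> prob_space G \<and> sets G = sets borel \<and> measure G {lo..hi} = 1"

definition cdf :: "real measure \<Rightarrow> real \<Rightarrow> real" where
  "cdf G s = measure G {..s}"

definition cond_exp_below :: "real measure \<Rightarrow> real \<Rightarrow> real" where
  "cond_exp_below G t = (LINT s:{..t}|G. s) / measure G {..t}"

definition wP :: "real measure \<Rightarrow> real \<Rightarrow> real \<Rightarrow> real \<Rightarrow> real \<Rightarrow> bool" where
  "wP G mu hi phit phid \<longleftrightarrow>
     phit \<le> (LINT s:{mu + phid..hi}|G. (s - (mu + phid)))"

text \<open>(w-HE); the conditional expectation at tau is required to be well defined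
  (G(tau) > 0), which then also makes it well defined at every tau' > tau.\<close>
definition wHE :: "real measure \<Rightarrow> real \<Rightarrow> real \<Rightarrow> bool" where
  "wHE G phid tau \<longleftrightarrow>
     cdf G tau > 0 \<and>
     tau - phid = cond_exp_below G tau \<and>
     (\<forall>tau'. tau' > tau \<longrightarrow> tau' - phid \<ge> cond_exp_below G tau')"

definition feasible_RE :: "real \<Rightarrow> real \<Rightarrow> real \<Rightarrow> real measure \<Rightarrow> real \<Rightarrow> real \<Rightarrow> real \<Rightarrow> bool" where
  "feasible_RE lo hi mu G phit phid tau \<longleftrightarrow>
     dist_on G lo hi \<and> wP G mu hi phit phid \<and> wHE G phid tau \<and> (LINT s|G. s) = mu"

definition objective_RE :: "real measure \<Rightarrow> real \<Rightarrow> real \<Rightarrow> real \<Rightarrow> real" where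
  "objective_RE G phit phid tau = phit + phid * (1 - cdf G tau)"

end

theory Submission
  imports Defs
begin

text \<open>Let I(x) = E_G[max (x - s) 0] be the first lower partial moment of G, so that I' = G and
  I is convex. (w-P) bounds the objective by I(mu + phid) - phid G(tau), while (w-HE) says
  I(tau) = phid G(tau) and I \<ge> phid G beyond tau. Beyond tau, I therefore grows at most like
  exp((x - tau)/phid) (a Gronwall argument), and convexity together with I(hi) = hi - mu
  bounds it from the other side. Combining the two bounds shows that, when lo < mu, every
  feasible point with mu + phid < hi has objective strictly below
  (hi - mu)(1 - exp(-(mu - lo)/(hi - mu))), whereas this value is attained by a feasible point
  with mu + phid = hi: an atom at lo followed by an exponential density on [lo + hi - mu, hi].
  Hence an optimal point has mu + phid \<ge> hi and the claim is vacuous. If mu \<le> lo, then G is the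
  point mass at lo.\<close>

lemma two_mult_less_exp_minus_exp_neg:
  fixes u :: real
  assumes "0 < u"
  shows "2 * u < exp u - exp (-u)"
proof -
  let ?f = "\<lambda>x::real. exp x - exp (-x) - 2 * x"
  have "?f 0 < ?f u"
  proof (rule DERIV_pos_imp_increasing_open[OF assms])
    fix x :: real assume "0 < x"
    have "1 + x < exp x" "1 - x \<le> exp (-x)"
      using exp_minus_greater[of "-x"] \<open>0 < x\<close> exp_minus_ge[of x] by auto
    moreover have "DERIV ?f x :> exp x + exp (-x) - 2"
      by (auto intro!: derivative_eq_intros)
    ultimately show "\<exists>y. DERIV ?f x :> y \<and> 0 < y"
      by (intro exI[of _ "exp x + exp (-x) - 2"]) auto
  qed (intro continuous_intros)
  then show ?thesis by simp
qed

lemma square_mult_exp_less: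
  fixes t :: real
  assumes "0 < t"
  shows "t\<^sup>2 * exp t < (exp t - 1)\<^sup>2"
proof -
  have "t * exp (t/2) < (exp (t/2) - exp (-(t/2))) * exp (t/2)"
    using two_mult_less_exp_minus_exp_neg[of "t/2"] assms by simp
  also have "\<dots> = exp t - 1"
    by (simp add: algebra_simps flip: exp_add)
  finally have "(t * exp (t/2))\<^sup>2 < (exp t - 1)\<^sup>2"
    using assms by (intro power_strict_mono) auto
  then show ?thesis
    by (simp add: power_mult_distrib flip: exp_of_nat_mult)
qed

lemma inverse_exp_minus_one_minus_inverse_strict_mono:
  fixes s t :: real
  assumes "0 < s" "s < t"
  shows "1 / (exp s - 1) - 1 / s < 1 / (exp t - 1) - 1 / t"
proof -
  let ?f = "\<lambda>x::real. inverse (exp x - 1) - inverse x"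
  have "?f s < ?f t"
  proof (rule DERIV_pos_imp_increasing_open[OF assms(2)])
    fix x :: real assume "s < x"
    then have "0 < x" "exp x - 1 \<noteq> 0" using assms by auto
    have "DERIV ?f x :> inverse x ^ 2 - exp x / (exp x - 1)\<^sup>2"
      using \<open>0 < x\<close> \<open>exp x - 1 \<noteq> 0\<close>
      by (auto intro!: derivative_eq_intros simp: power2_eq_square field_simps)
    moreover have "exp x / (exp x - 1)\<^sup>2 < inverse x ^ 2"
      using square_mult_exp_less[OF \<open>0 < x\<close>] \<open>0 < x\<close> \<open>exp x - 1 \<noteq> 0\<close>
      by (simp add: divide_less_eq power_inverse field_simps)
    ultimately show "\<exists>y. DERIV ?f x :> y \<and> 0 < y" by auto
  next
    show "continuous_on {s..t} ?f"
      using assms by (intro continuous_intros) auto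
  qed
  then show ?thesis by (simp add: divide_inverse)
qed

lemma exp_div_difference_less:
  fixes k w d :: real
  assumes "0 < w" "0 < d" "d < k"
  shows "w * (exp (w/d) - exp (w/k)) < (k - d) * ((exp (w/k) - 1) * (exp (w/d) - 1))"
proof -
  define F E where "F = exp (w/k)" and "E = exp (w/d)"
  have "w/k < w/d" using assms by (simp add: frac_less2)
  then have "F < E" "1 < F" unfolding F_def E_def using assms by simp_all
  have "1/(F - 1) - 1/(w/k) < 1/(E - 1) - 1/(w/d)"
    unfolding F_def E_def
    using inverse_exp_minus_one_minus_inverse_strict_mono[OF _ \<open>w/k < w/d\<close>] assms by simp
  then have "w * (1/(F - 1) - k/w) < w * (1/(E - 1) - d/w)"
    using \<open>0 < w\<close> by simp
  then have "w/(F - 1) - w/(E - 1) < k - d"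
    using \<open>0 < w\<close> by (simp add: right_diff_distrib)
  moreover have "w * (E - F) = (w/(F - 1) - w/(E - 1)) * ((F - 1) * (E - 1))"
  proof -
    have "F - 1 \<noteq> 0" "E - 1 \<noteq> 0" using \<open>1 < F\<close> \<open>F < E\<close> by auto
    then have "w/(F - 1) * ((F - 1) * (E - 1)) = w * (E - 1)"
      and "w/(E - 1) * ((F - 1) * (E - 1)) = w * (F - 1)" by simp_all
    then show ?thesis by (simp add: left_diff_distrib algebra_simps)
  qed
  ultimately have "w * (E - F) < (k - d) * ((F - 1) * (E - 1))"
    using \<open>1 < F\<close> \<open>F < E\<close> by (simp add: mult_strict_right_mono)
  then show ?thesis
    unfolding F_def E_def .
qed

text \<open>In the application, V = I(mu + d) - d G(tau) bounds the objective, P = d G(tau) = I(tau),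
  w = mu + d - tau, and k = hi - mu; the two hypotheses are the Gronwall and convexity bounds.\<close>

lemma value_bound_zero_fee:
  fixes k w V P :: real
  assumes "0 < k" "0 < w" "0 \<le> P"
    and convex: "k * V \<le> w * (k - V - P)"
  shows "V * exp (w/k) < k * (exp (w/k) - 1)"
proof -
  define F where "F = exp (w/k)"
  have "1 + w/k < F"
    unfolding F_def using exp_minus_greater[of "-(w/k)"] assms by simp
  then have gap: "w < (F - 1) * k" using \<open>0 < k\<close> by (simp add: field_simps)
  have "V * (k + w) \<le> w * k"
    using convex mult_left_mono[OF \<open>0 \<le> P\<close>, of w] \<open>0 < w\<close> by (simp add: algebra_simps)
  then have "V * F * (k + w) \<le> w * k * F"
    using mult_right_mono[of "V * (k + w)" "w * k" F] unfolding F_def by (simp add: algebra_simps)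
  also have "\<dots> < k * (F - 1) * (k + w)"
  proof -
    have "k * (F - 1) * (k + w) - w * k * F = k * ((F - 1) * k - w)"
      by (simp add: algebra_simps)
    moreover have "0 < k * ((F - 1) * k - w)" using gap \<open>0 < k\<close> by simp
    ultimately show ?thesis by linarith
  qed
  finally show ?thesis
    unfolding F_def using assms by (simp add: mult_less_cancel_right)
qed

text \<open>This bound degenerates to equality as d tends to k; its strictness comes from
  exp_div_difference_less, that is, from the strict monotonicity of 1/(exp t - 1) - 1/t.\<close>

lemma value_bound_pos_fee:
  fixes k w d V P :: real
  assumes "0 < k" "0 < w" "0 < d" "d < k"
    and growth: "V \<le> P * (exp (w/d) - 1)"
    and convex: "(k - d) * V \<le> w * (k - V - P)"
  shows "V * exp (w/k) < k * (exp (w/k) - 1)"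
proof -
  define F E where "F = exp (w/k)" and "E = exp (w/d)"
  have gap: "w * (E - F) < (k - d) * ((F - 1) * (E - 1))"
    unfolding F_def E_def using exp_div_difference_less assms by blast
  have "1 < F" "F < E" unfolding F_def E_def using assms by (simp_all add: frac_less2)
  define D where "D = w + (E - 1) * (w + k - d)"
  have "0 < D" unfolding D_def using assms \<open>1 < F\<close> \<open>F < E\<close> by (intro add_pos_nonneg) auto
  have "V * w \<le> P * w * (E - 1)"
    using growth \<open>0 < w\<close> unfolding E_def by (simp add: mult.commute mult_left_mono)
  also have "\<dots> \<le> (w * k - w * V - (k - d) * V) * (E - 1)"
    using convex \<open>1 < F\<close> \<open>F < E\<close> by (intro mult_right_mono) (auto simp: algebra_simps)
  finally have "V * D \<le> (E - 1) * w * k"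
    unfolding D_def by (simp add: algebra_simps)
  then have "V * F * D \<le> (E - 1) * w * k * F"
    using \<open>1 < F\<close> by (simp add: mult.commute mult.left_commute mult_left_mono)
  also have "\<dots> < k * (F - 1) * D"
  proof -
    have "k * (F - 1) * D - (E - 1) * w * k * F = k * ((k - d) * ((F - 1) * (E - 1)) - w * (E - F))"
      unfolding D_def by (simp add: algebra_simps)
    moreover have "0 < k * ((k - d) * ((F - 1) * (E - 1)) - w * (E - F))"
      using gap \<open>0 < k\<close> by simp
    ultimately show ?thesis by linarith
  qed
  finally show ?thesis
    unfolding F_def using \<open>0 < D\<close> by (simp add: mult_less_cancel_right)
qed

lemma value_bound:
  fixes k w M d V P :: real
  assumes "0 < k" "0 < w" "w \<le> M" "0 \<le> d" "d < k" "0 \<le> P"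
    and growth: "0 < d \<Longrightarrow> V \<le> P * (exp (w/d) - 1)"
    and convex: "(k - d) * V \<le> w * (k - V - P)"
  shows "V < k * (1 - exp (- M/k))"
proof -
  have "V * exp (w/k) < k * (exp (w/k) - 1)"
    using value_bound_zero_fee[of k w P V] value_bound_pos_fee[of k w d V P] assms
    by (cases "d = 0") auto
  then have "V < k * (1 - exp (- w/k))"
    by (simp add: field_simps exp_minus)
  also have "\<dots> \<le> k * (1 - exp (- M/k))"
    using assms by (simp add: divide_right_mono)
  finally show ?thesis .
qed

lemma gronwall_iterate_bound:
  fixes f :: "real \<Rightarrow> real"
  assumes "0 < d" "0 < h" "h \<le> d"
    and slope: "\<And>x y. tau \<le> x \<Longrightarrow> x < y \<Longrightarrow> d * (f y - f x) \<le> (y - x) * f y"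
  shows "f (tau + real j * h) * (1 - h/d) ^ j \<le> f tau"
proof (induction j)
  case 0
  then show ?case by simp
next
  case (Suc j)
  let ?x = "tau + real j * h"
  have "d * (f (?x + h) - f ?x) \<le> h * f (?x + h)"
    using slope[of ?x "?x + h"] assms by simp
  then have step: "f (?x + h) * (1 - h/d) \<le> f ?x"
    using \<open>0 < d\<close> by (simp add: field_simps)
  have "f (tau + real (Suc j) * h) * (1 - h/d) ^ Suc j = f (?x + h) * (1 - h/d) * (1 - h/d) ^ j"
    by (simp add: algebra_simps)
  also have "\<dots> \<le> f ?x * (1 - h/d) ^ j"
    using step assms by (intro mult_right_mono) auto
  also have "\<dots> \<le> f tau"
    by (rule Suc.IH)
  finally show ?case .
qed

lemma gronwall_exp_bound:
  fixes f :: "real \<Rightarrow> real"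
  assumes "0 < d" "tau \<le> a"
    and slope: "\<And>x y. tau \<le> x \<Longrightarrow> x < y \<Longrightarrow> d * (f y - f x) \<le> (y - x) * f y"
  shows "f a \<le> f tau * exp ((a - tau) / d)"
proof (cases "a = tau")
  case False
  define t where "t = (a - tau) / d"
  have "0 < t" unfolding t_def using assms False by simp
  obtain N :: nat where "t < real N" using reals_Archimedean2 by blast
  have "f a * (1 + (-t) / real n) ^ n \<le> f tau" if "N \<le> n" for n
  proof -
    have "t < real n" "0 < real n" using \<open>t < real N\<close> \<open>0 < t\<close> that by linarith+
    then have "a - tau < real n * d" using \<open>0 < d\<close> unfolding t_def by (simp add: divide_less_eq)
    define h where "h = (a - tau) / real n"
    have "0 < h" "h \<le> d" "tau + real n * h = a" "1 - h/d = 1 + (-t) / real n"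
      using \<open>a - tau < real n * d\<close> \<open>0 < real n\<close> \<open>0 < t\<close> assms unfolding h_def t_def
      by (auto simp: field_simps)
    then show ?thesis
      using gronwall_iterate_bound[where tau = tau and j = n, OF \<open>0 < d\<close> \<open>0 < h\<close> \<open>h \<le> d\<close>] slope
      by simp
  qed
  moreover have "(\<lambda>n. f a * (1 + (-t) / real n) ^ n) \<longlonglongrightarrow> f a * exp (-t)"
    by (intro tendsto_intros tendsto_exp_limit_sequentially)
  ultimately have "f a * exp (-t) \<le> f tau"
    using LIMSEQ_le_const2 by blast
  then have "f a * exp (-t) * exp t \<le> f tau * exp t"
    by (intro mult_right_mono) auto
  then show ?thesis
    unfolding t_def by (simp add: mult.assoc flip: exp_add)
qed simp

definition lower_partial_moment :: "real measure \<Rightarrow> real \<Rightarrow> real" where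
  "lower_partial_moment G x = (LINT s:{..x}|G. x - s)"

locale interval_distribution = prob_space G for G :: "real measure" +
  fixes lo hi :: real
  assumes sets_eq_borel [measurable_cong]: "sets G = sets borel"
    and measure_interval: "measure G {lo..hi} = 1"

lemma dist_on_imp_interval_distribution:
  "dist_on G lo hi \<Longrightarrow> interval_distribution G lo hi"
  unfolding dist_on_def by (simp add: interval_distribution_def interval_distribution_axioms_def)

context interval_distribution
begin

lemma space_eq_UNIV [simp]: "space G = UNIV"
  using sets_eq_imp_space_eq[OF sets_eq_borel] by simp

lemma AE_in_interval: "AE s in G. lo \<le> s \<and> s \<le> hi"
  using AE_in_set_eq_1[of "{lo..hi}"] measure_interval by simp

lemma prob_UNIV [simp]: "prob UNIV = 1"
  using prob_space by simp

lemma integrable_indicator [simp]: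
  "A \<in> sets borel \<Longrightarrow> integrable G (indicator A :: real \<Rightarrow> real)"
  by (simp add: emeasure_eq_measure)

lemma integrable_id [simp]: "integrable G (\<lambda>s. s)"
proof (rule integrable_const_bound[of _ "\<bar>lo\<bar> + \<bar>hi\<bar>"])
  show "AE s in G. norm s \<le> \<bar>lo\<bar> + \<bar>hi\<bar>"
    using AE_in_interval by eventually_elim auto
qed measurable

lemma integrable_indicator_mult [simp]:
  fixes f :: "real \<Rightarrow> real"
  shows "A \<in> sets borel \<Longrightarrow> integrable G f \<Longrightarrow> integrable G (\<lambda>s. indicator A s * f s)"
  using integrable_mult_indicator[of A G f] by simp

lemma lower_partial_moment_integral:
  "lower_partial_moment G x = (\<integral>s. indicator {..x} s * (x - s) \<partial>G)"
  unfolding lower_partial_moment_def set_lebesgue_integral_def by simp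

lemma integral_indicator_mult_const:
  "(\<integral>s. indicator {..x} s * c \<partial>G) = c * cdf G x"
  unfolding cdf_def by (simp add: mult.commute)

lemma lower_partial_moment_nonneg: "0 \<le> lower_partial_moment G x"
  unfolding lower_partial_moment_integral
  by (intro integral_nonneg_AE AE_I2) (simp split: split_indicator)

lemma lower_partial_moment_eq:
  "lower_partial_moment G x = x * cdf G x - (LINT s:{..x}|G. s)"
proof -
  have "lower_partial_moment G x
      = (\<integral>s. indicator {..x} s * x - indicator {..x} s * s \<partial>G)"
    unfolding lower_partial_moment_integral by (simp add: algebra_simps)
  also have "\<dots> = x * cdf G x - (LINT s:{..x}|G. s)"
    unfolding set_lebesgue_integral_def integral_indicator_mult_const[symmetric]
    by (subst Bochner_Integration.integral_diff) simp_all
  finally show ?thesis .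
qed

lemma lower_partial_moment_increment:
  assumes "x \<le> y"
  shows "(y - x) * cdf G x \<le> lower_partial_moment G y - lower_partial_moment G x"
    and "lower_partial_moment G y - lower_partial_moment G x \<le> (y - x) * cdf G y"
proof -
  have diff: "lower_partial_moment G y - lower_partial_moment G x
      = (\<integral>s. indicator {..y} s * (y - s) - indicator {..x} s * (x - s) \<partial>G)"
    unfolding lower_partial_moment_integral by (subst Bochner_Integration.integral_diff) simp_all
  show "(y - x) * cdf G x \<le> lower_partial_moment G y - lower_partial_moment G x"
    unfolding diff integral_indicator_mult_const[symmetric]
    by (intro integral_mono) (use assms in \<open>auto split: split_indicator\<close>)
  show "lower_partial_moment G y - lower_partial_moment G x \<le> (y - x) * cdf G y"
    unfolding diff integral_indicator_mult_const[symmetric]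
    by (intro integral_mono) (use assms in \<open>auto split: split_indicator\<close>)
qed

lemma lower_partial_moment_mono:
  assumes "x \<le> y"
  shows "lower_partial_moment G x \<le> lower_partial_moment G y"
proof -
  have "0 \<le> (y - x) * cdf G x"
    using assms unfolding cdf_def by simp
  then show ?thesis
    using lower_partial_moment_increment(1)[OF assms] by linarith
qed

lemma lower_partial_moment_le: "lower_partial_moment G x \<le> (x - lo) * cdf G x"
  unfolding lower_partial_moment_integral integral_indicator_mult_const[symmetric]
  by (intro integral_mono_AE) (use AE_in_interval in \<open>auto split: split_indicator\<close>)

lemma lower_partial_moment_ge_hi:
  assumes "hi \<le> x"
  shows "lower_partial_moment G x = x - expectation (\<lambda>s. s)"
proof -
  have "lower_partial_moment G x = (\<integral>s. x - s \<partial>G)"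
    unfolding lower_partial_moment_integral
    by (intro integral_cong_AE) (use AE_in_interval assms in \<open>auto split: split_indicator\<close>)
  then show ?thesis by simp
qed

lemma upper_tail_integral:
  assumes "a \<le> hi"
  shows "(LINT s:{a..hi}|G. s - a) = expectation (\<lambda>s. s) - a + lower_partial_moment G a"
proof -
  have "(LINT s:{a..hi}|G. s - a) = (\<integral>s. (s - a) + indicator {..a} s * (a - s) \<partial>G)"
    unfolding set_lebesgue_integral_def
    by (intro integral_cong_AE) (use AE_in_interval assms in \<open>auto split: split_indicator\<close>)
  then show ?thesis
    unfolding lower_partial_moment_integral by simp
qed

lemma lo_le_expectation: "lo \<le> expectation (\<lambda>s. s)"
  using integral_mono_AE[of G "\<lambda>_. lo" "\<lambda>s. s"] AE_in_interval by auto

lemma cdf_eq_1_if_expectation_le_lo: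
  assumes "expectation (\<lambda>s. s) \<le> lo" "lo \<le> x"
  shows "cdf G x = 1"
proof -
  have nonneg: "AE s in G. 0 \<le> s - lo"
    using AE_in_interval by eventually_elim simp
  have "(\<integral>s. s - lo \<partial>G) = 0"
    using assms(1) integral_nonneg_AE[OF nonneg] by simp
  then have "AE s in G. s - lo = 0"
    using integral_nonneg_eq_0_iff_AE[OF _ nonneg] by simp
  then have "AE s in G. s \<in> {..x}"
    by eventually_elim (use assms(2) in simp)
  then show ?thesis
    unfolding cdf_def using AE_in_set_eq_1[of "{..x}"] by simp
qed

lemma wHE_lower_partial_moment:
  assumes "wHE G d tau"
  shows "0 < cdf G tau"
    and "lower_partial_moment G tau = d * cdf G tau"
    and "\<And>y. tau < y \<Longrightarrow> d * cdf G y \<le> lower_partial_moment G y"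
proof -
  have cond_exp: "cond_exp_below G x = (LINT s:{..x}|G. s) / cdf G x" for x
    unfolding cond_exp_below_def cdf_def ..
  show pos: "0 < cdf G tau" using assms unfolding wHE_def by simp
  have "tau - d = (LINT s:{..tau}|G. s) / cdf G tau"
    using assms unfolding wHE_def cond_exp by simp
  then show "lower_partial_moment G tau = d * cdf G tau"
    using pos unfolding lower_partial_moment_eq by (simp add: field_simps)
  fix y assume "tau < y"
  have "cdf G tau \<le> cdf G y"
    unfolding cdf_def using \<open>tau < y\<close> by (intro finite_measure_mono) auto
  then have "0 < cdf G y" using \<open>0 < cdf G tau\<close> by simp
  moreover have "(LINT s:{..y}|G. s) / cdf G y \<le> y - d"
    using assms \<open>tau < y\<close> unfolding wHE_def cond_exp by simp
  ultimately have "(LINT s:{..y}|G. s) \<le> (y - d) * cdf G y"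
    by (simp add: pos_divide_le_eq)
  then show "d * cdf G y \<le> lower_partial_moment G y"
    unfolding lower_partial_moment_eq by (simp add: algebra_simps)
qed

lemma wHE_fee_nonneg:
  assumes "wHE G d tau"
  shows "0 \<le> d"
  using wHE_lower_partial_moment(1,2)[OF assms] lower_partial_moment_nonneg[of tau]
  by (simp add: zero_le_mult_iff)

lemma wHE_threshold_ge:
  assumes "wHE G d tau"
  shows "lo \<le> tau - d"
  using wHE_lower_partial_moment(1,2)[OF assms] lower_partial_moment_le[of tau] by simp

lemma wHE_lower_partial_moment_slope:
  assumes "wHE G d tau" "tau \<le> x" "x < y"
  shows "d * (lower_partial_moment G y - lower_partial_moment G x) \<le> (y - x) * lower_partial_moment G y"
proof -
  have "d * (lower_partial_moment G y - lower_partial_moment G x) \<le> d * ((y - x) * cdf G y)"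
    using lower_partial_moment_increment(2)[of x y] wHE_fee_nonneg[OF assms(1)] assms
    by (intro mult_left_mono) auto
  also have "\<dots> \<le> (y - x) * lower_partial_moment G y"
    using wHE_lower_partial_moment(3)[OF assms(1), of y] assms by (simp add: mult_left_mono)
  finally show ?thesis .
qed

lemma wP_objective_le:
  assumes "wP G mu hi phit d" "expectation (\<lambda>s. s) = mu" "mu + d \<le> hi"
  shows "objective_RE G phit d tau \<le> lower_partial_moment G (mu + d) - d * cdf G tau"
  using assms upper_tail_integral[of "mu + d"]
  unfolding wP_def objective_RE_def by (simp add: algebra_simps)

end

definition value_RE :: "real \<Rightarrow> real \<Rightarrow> real \<Rightarrow> real" where
  "value_RE lo hi mu = (hi - mu) * (1 - exp (- (mu - lo) / (hi - mu)))"

theorem feasible_RE_objective_less_value: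
  assumes feas: "feasible_RE lo hi mu G phit d tau" and "mu + d < hi" "lo < mu"
  shows "objective_RE G phit d tau < value_RE lo hi mu"
proof -
  interpret interval_distribution G lo hi
    using feas by (simp add: feasible_RE_def dist_on_imp_interval_distribution)
  have wP: "wP G mu hi phit d" and wHE: "wHE G d tau" and mean: "expectation (\<lambda>s. s) = mu"
    using feas unfolding feasible_RE_def by auto
  define I where "I = lower_partial_moment G"
  define a k L where "a = mu + d" and "k = hi - mu" and "L = cdf G tau"
  have "0 \<le> d" using wHE_fee_nonneg[OF wHE] .
  have "I tau = d * L" "0 < L"
    using wHE_lower_partial_moment[OF wHE] unfolding I_def L_def by auto
  have obj: "objective_RE G phit d tau \<le> I a - d * L"
    using wP_objective_le[OF wP mean] \<open>mu + d < hi\<close> unfolding I_def a_def L_def by simp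
  have "0 < value_RE lo hi mu"
    unfolding value_RE_def using \<open>lo < mu\<close> \<open>mu + d < hi\<close> \<open>0 \<le> d\<close>
    by (intro mult_pos_pos) (auto simp: divide_less_0_iff)
  show ?thesis
  proof (cases "a \<le> tau")
    case True
    then have "I a \<le> I tau" unfolding I_def by (rule lower_partial_moment_mono)
    then show ?thesis using obj \<open>I tau = d * L\<close> \<open>0 < value_RE lo hi mu\<close> by linarith
  next
    case False
    define w where "w = a - tau"
    have "0 < w" "w \<le> mu - lo"
      using False wHE_threshold_ge[OF wHE] unfolding w_def a_def by auto
    have growth: "I a - d * L \<le> d * L * (exp (w/d) - 1)" if "0 < d"
      using gronwall_exp_bound[OF that, of tau a I] wHE_lower_partial_moment_slope[OF wHE] False
        \<open>I tau = d * L\<close>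
      unfolding w_def I_def by (simp add: algebra_simps)
    have "(k - d) * (I a - I tau) \<le> (k - d) * (w * cdf G a)"
      using lower_partial_moment_increment(2)[of tau a] False \<open>mu + d < hi\<close>
      unfolding I_def w_def k_def by (intro mult_left_mono) auto
    also have "\<dots> = w * ((hi - a) * cdf G a)"
      unfolding k_def a_def by simp
    also have "\<dots> \<le> w * (I hi - I a)"
      using lower_partial_moment_increment(1)[of a hi] \<open>0 < w\<close> \<open>mu + d < hi\<close>
      unfolding I_def a_def by (intro mult_left_mono) auto
    finally have convex: "(k - d) * (I a - d * L) \<le> w * (k - (I a - d * L) - d * L)"
      using lower_partial_moment_ge_hi[of hi] mean \<open>I tau = d * L\<close>
      unfolding I_def k_def by (simp add: algebra_simps)
    have "I a - d * L < k * (1 - exp (- (mu - lo) / k))"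
      using value_bound[OF _ \<open>0 < w\<close> \<open>w \<le> mu - lo\<close> \<open>0 \<le> d\<close> _ _ growth convex]
        \<open>0 < L\<close> \<open>0 \<le> d\<close> \<open>mu + d < hi\<close>
      unfolding k_def by (simp add: minus_divide_left)
    then show ?thesis
      using obj unfolding value_RE_def k_def by linarith
  qed
qed

locale extremal_RE =
  fixes lo mu hi :: real
  assumes lo_less_mu: "lo < mu" and mu_less_hi: "mu < hi"
begin

definition "k = hi - mu"
definition "tau0 = lo + k"
definition "L = exp (- (mu - lo) / k)"
definition "E x = exp ((x - tau0) / k)"
definition "dens s = L * indicator {lo - 1..lo} s + indicator {tau0..hi} s * (L / k * E s)"

text \<open>The atom of mass L at lo is produced by pushing the mass L of dens on [lo - 1, lo] forward
  along max lo; on [tau0, hi] the CDF is L * E, which makes (w-HE) hold with equality there.\<close>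
definition "Gs = distr (density lborel dens) borel (\<lambda>s. max lo s)"

lemma k_pos: "0 < k"
  unfolding k_def using mu_less_hi by simp

lemma lo_less_tau0: "lo < tau0"
  unfolding tau0_def using k_pos by simp

lemma tau0_less_hi: "tau0 < hi"
  unfolding tau0_def k_def using lo_less_mu by simp

lemma E_pos: "0 < E x" and E_tau0: "E tau0 = 1" and L_mult_E_hi: "L * E hi = 1"
  using mu_less_hi unfolding L_def E_def tau0_def k_def by (simp_all flip: exp_add add: field_simps)

lemma E_has_derivative: "(E has_real_derivative E x / k) (at x)"
  unfolding E_def using k_pos by (auto intro!: derivative_eq_intros)

lemma isCont_E: "isCont E x"
  using E_has_derivative DERIV_isCont by blast

lemma integral_density_part:
  assumes "tau0 \<le> b"
  shows "(\<integral>s. L / k * E s * indicator {tau0..b} s \<partial>lborel) = L * E b - L"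
proof -
  have "(\<integral>s. L / k * E s * indicator {tau0..b} s \<partial>lborel) = L * E b - L * E tau0"
  proof (rule integral_FTC_Icc_real[OF assms])
    show "((\<lambda>s. L * E s) has_real_derivative L / k * E x) (at x)" for x
      using DERIV_cmult[OF E_has_derivative, of L] by simp
    show "isCont (\<lambda>s. L / k * E s) x" for x
      by (intro continuous_intros isCont_E)
  qed
  then show ?thesis using E_tau0 by simp
qed

lemma integral_density_part_id:
  assumes "tau0 \<le> b"
  shows "(\<integral>s. L / k * E s * s * indicator {tau0..b} s \<partial>lborel) = L * (b - k) * E b - L * lo"
proof -
  have "(\<integral>s. L / k * E s * s * indicator {tau0..b} s \<partial>lborel)
      = L * (b - k) * E b - L * (tau0 - k) * E tau0"
  proof (rule integral_FTC_Icc_real[OF assms])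
    show "((\<lambda>s. L * (s - k) * E s) has_real_derivative L / k * E x * x) (at x)" for x
      using k_pos by (auto intro!: derivative_eq_intros E_has_derivative simp: field_simps)
    show "isCont (\<lambda>s. L / k * E s * s) x" for x
      by (intro continuous_intros isCont_E)
  qed
  then show ?thesis using E_tau0 unfolding tau0_def by simp
qed

lemma dens_nonneg: "0 \<le> dens s"
  unfolding dens_def L_def using E_pos[of s] k_pos by (simp split: split_indicator)

lemma borel_measurable_dens [measurable]: "dens \<in> borel_measurable borel"
  unfolding dens_def E_def by measurable

lemma sets_Gs [simp, measurable_cong]: "sets Gs = sets borel"
  unfolding Gs_def by simp

lemma space_Gs [simp]: "space Gs = UNIV"
  using sets_eq_imp_space_eq[OF sets_Gs] by simp

lemma integrable_density_part:
  assumes "\<And>s. isCont g s"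
  shows "integrable lborel (\<lambda>s. L / k * E s * g s * indicator {tau0..b} s)"
  by (intro borel_integrable_atLeastAtMost continuous_intros isCont_E assms)

lemma integral_Gs:
  fixes f :: "real \<Rightarrow> real"
  assumes [measurable]: "f \<in> borel_measurable borel"
    and integrable: "integrable lborel (\<lambda>s. L / k * E s * f s * indicator {tau0..hi} s)"
  shows "integral\<^sup>L Gs f = L * f lo + (\<integral>s. L / k * E s * f s * indicator {tau0..hi} s \<partial>lborel)"
proof -
  have "integral\<^sup>L Gs f = (\<integral>s. f (max lo s) \<partial>density lborel dens)"
    unfolding Gs_def by (simp add: integral_distr)
  also have "\<dots> = (\<integral>s. dens s * f (max lo s) \<partial>lborel)"
    using dens_nonneg by (subst integral_density) auto
  also have "\<dots> = (\<integral>s. L * f lo * indicator {lo - 1..lo} s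
                       + L / k * E s * f s * indicator {tau0..hi} s \<partial>lborel)"
    using lo_less_tau0
    by (intro Bochner_Integration.integral_cong) (auto simp: dens_def max_def split: split_indicator)
  also have "\<dots> = L * f lo + (\<integral>s. L / k * E s * f s * indicator {tau0..hi} s \<partial>lborel)"
    using integrable by simp
  finally show ?thesis .
qed

lemma prob_space_Gs: "prob_space Gs"
proof (rule prob_spaceI)
  have dens_eq: "dens = (\<lambda>s. L * 1 * indicator {lo - 1..lo} s + L / k * E s * 1 * indicator {tau0..hi} s)"
    unfolding dens_def by (auto simp: algebra_simps)
  have integrable: "integrable lborel dens"
    unfolding dens_eq by (intro Bochner_Integration.integrable_add integrable_density_part
        borel_integrable_atLeastAtMost continuous_intros)
  have "emeasure Gs (space Gs) = (\<integral>\<^sup>+ s. dens s \<partial>lborel)"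
    unfolding Gs_def by (simp add: emeasure_distr emeasure_density)
  also have "\<dots> = ennreal (\<integral>s. dens s \<partial>lborel)"
    using dens_nonneg by (intro nn_integral_eq_integral integrable) auto
  also have "(\<integral>s. dens s \<partial>lborel) = L + (L * E hi - L)"
    using integral_density_part[of hi] tau0_less_hi integrable_density_part[of "\<lambda>_. 1" hi]
    unfolding dens_eq by simp
  finally show "emeasure Gs (space Gs) = 1"
    using L_mult_E_hi by simp
qed

lemma integral_Gs_atMost:
  fixes g :: "real \<Rightarrow> real"
  assumes "tau0 \<le> x" and g_cont: "\<And>s. isCont g s"
  shows "(\<integral>t. indicator {..x} t * g t \<partial>Gs)
           = L * g lo + (\<integral>s. L / k * E s * g s * indicator {tau0..min x hi} s \<partial>lborel)"
proof -
  have [measurable]: "g \<in> borel_measurable borel"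
    using g_cont by (intro borel_measurable_continuous_onI continuous_at_imp_continuous_on) auto
  have restrict: "(\<lambda>s. L / k * E s * (indicator {..x} s * g s) * indicator {tau0..hi} s)
      = (\<lambda>s. L / k * E s * g s * indicator {tau0..min x hi} s)"
    by (auto simp: indicator_def)
  show ?thesis
    using integral_Gs[of "\<lambda>t. indicator {..x} t * g t"] integrable_density_part[OF g_cont]
      assms(1) lo_less_tau0
    unfolding restrict by simp
qed

lemma cdf_Gs: "tau0 \<le> x \<Longrightarrow> cdf Gs x = L * E (min x hi)"
  using integral_Gs_atMost[of x "\<lambda>_. 1"] integral_density_part[of "min x hi"] tau0_less_hi
  unfolding cdf_def by simp

lemma set_integral_Gs_atMost:
  "tau0 \<le> x \<Longrightarrow> (LINT t:{..x}|Gs. t) = L * (min x hi - k) * E (min x hi)"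
  using integral_Gs_atMost[of x "\<lambda>t. t"] integral_density_part_id[of "min x hi"] tau0_less_hi
  unfolding set_lebesgue_integral_def by simp

lemma expectation_Gs: "(LINT s|Gs. s) = mu"
  using integral_Gs[of "\<lambda>s. s"] integrable_density_part[of "\<lambda>s. s" hi]
    integral_density_part_id[of hi] tau0_less_hi L_mult_E_hi
  unfolding k_def by (simp add: algebra_simps)

lemma measure_Gs_interval: "measure Gs {lo..hi} = 1"
proof -
  have restrict: "(\<lambda>s. L / k * E s * indicator {lo..hi} s * indicator {tau0..hi} s)
      = (\<lambda>s. L / k * E s * 1 * indicator {tau0..hi} s)"
    using lo_less_tau0 by (auto simp: indicator_def)
  have "measure Gs {lo..hi} = integral\<^sup>L Gs (indicator {lo..hi})"
    by simp
  also have "\<dots> = L + (L * E hi - L)"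
    using integral_Gs[of "indicator {lo..hi}"] integrable_density_part[of "\<lambda>_. 1" hi]
      integral_density_part[of hi] lo_less_tau0 tau0_less_hi
    unfolding restrict by simp
  finally show ?thesis
    using L_mult_E_hi by simp
qed

lemma cond_exp_below_Gs: "tau0 \<le> x \<Longrightarrow> cond_exp_below Gs x = min x hi - k"
  using cdf_Gs[of x] set_integral_Gs_atMost[of x] E_pos[of "min x hi"] L_def
  unfolding cond_exp_below_def cdf_def by simp

lemma feasible_RE_Gs: "feasible_RE lo hi mu Gs 0 k tau0"
  unfolding feasible_RE_def
proof (intro conjI)
  show "dist_on Gs lo hi"
    unfolding dist_on_def using prob_space_Gs measure_Gs_interval by simp
  have "mu + k = hi"
    unfolding k_def by simp
  then show "wP Gs mu hi 0 k"
    unfolding wP_def set_lebesgue_integral_def by (simp add: indicator_def)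
  show "wHE Gs k tau0"
    unfolding wHE_def
    using cdf_Gs[of tau0] cond_exp_below_Gs tau0_less_hi E_tau0 by (auto simp: L_def)
qed (rule expectation_Gs)

lemma objective_RE_Gs: "objective_RE Gs 0 k tau0 = value_RE lo hi mu"
  using cdf_Gs[of tau0] tau0_less_hi E_tau0
  unfolding objective_RE_def value_RE_def L_def k_def by simp

end

theorem lemma8:
  fixes F G :: "real measure" and lo hi mu phit phid tau :: real
  assumes F_prob: "prob_space F" and F_borel: "sets F = sets borel"
    and bounds: "0 \<le> lo" "lo < hi"
    and F_conc: "measure F {lo..hi} = 1"
    and lo_supp: "\<forall>e>0. measure F {lo - e<..<lo + e} > 0"
    and hi_supp: "\<forall>e>0. measure F {hi - e<..<hi + e} > 0"
    and mu_def: "mu = (LINT x|F. x)"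
    and feas: "feasible_RE lo hi mu G phit phid tau"
    and opt: "\<forall>G' phit' phid' tau'. feasible_RE lo hi mu G' phit' phid' tau' \<longrightarrow>
                 objective_RE G' phit' phid' tau' \<le> objective_RE G phit phid tau"
  shows "\<forall>s \<in> {mu + phid..<hi}. cdf G s = cdf G (mu + phid)"
proof (cases "mu + phid < hi")
  case True
  interpret interval_distribution G lo hi
    using feas by (simp add: feasible_RE_def dist_on_imp_interval_distribution)
  have mean: "expectation (\<lambda>s. s) = mu" and wHE: "wHE G phid tau"
    using feas unfolding feasible_RE_def by auto
  show ?thesis
  proof (cases "lo < mu")
    case True
    interpret extremal_RE lo mu hi
      using True \<open>mu + phid < hi\<close> wHE_fee_nonneg[OF wHE] by unfold_locales auto
    have "value_RE lo hi mu \<le> objective_RE G phit phid tau"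
      using opt feasible_RE_Gs objective_RE_Gs by metis
    then show ?thesis
      using feasible_RE_objective_less_value[OF feas \<open>mu + phid < hi\<close> True] by simp
  next
    case False
    then have "cdf G s = 1" if "lo \<le> s" for s
      using cdf_eq_1_if_expectation_le_lo[OF _ that] mean by simp
    then show ?thesis
      using lo_le_expectation mean wHE_fee_nonneg[OF wHE] by simp
  qed
qed simp

end
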